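(* Let $d\ge 2$ and let $B$ be the bilinear spherical averaging operator on $\mathbb{R}^d$ (defined in the context). Then for every $s\in[\frac12,1]$ there is a constant $C$ such that $$\|B(f,g)\|_{L^s(\mathbb{R}^d)}\le C\,\|f\|_{L^1(\mathbb{R}^d)}\|g\|_{L^1(\mathbb{R}^d)}\quad\text{for all } f,g\in L^1(\mathbb{R}^d).$$
   Context: Write points of $\mathbb{R}^{2d}$ as $(u_1,u_2)$ with $u_1,u_2\in\mathbb{R}^d$, and let $\sigma$ be the surface measure on the unit sphere $S^{2d-1}\subseteq\mathbb{R}^{2d}$. The bilinear spherical averaging operator is $$B(f,g)(x)=\int_{S^{2d-1}} f(x-u_1)\,g(x-u_2)\,d\sigma(u_1,u_2),\qquad x\in\mathbb{R}^d.$$ *)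

theory Defs
  imports "HOL-Analysis.Analysis"
begin

text \<open>Surface measure on the unit sphere of a Euclidean space of dimension n, via the
  cone construction: sigma(A) = n * lambda({r u. 0 < r \<le> 1, u \<in> A}), i.e. the push-forward of
  n times Lebesgue measure on the unit ball under y \<mapsto> y / |y|.\<close>
definition sphere_surface_measure :: "'a::euclidean_space measure" where
  "sphere_surface_measure =
     distr (density lborel (\<lambda>y. ennreal (real DIM('a)) * indicator (ball 0 1) y)) borel
       (\<lambda>y. y /\<^sub>R norm y)"

text \<open>Bilinear spherical averaging operator on R^d; points of R^(2d) are pairs (u1,u2).\<close>
definition bilinear_spherical_avg ::
  "(real^'n \<Rightarrow> real) \<Rightarrow> (real^'n \<Rightarrow> real) \<Rightarrow> real^'n \<Rightarrow> real" where
  "bilinear_spherical_avg f g x =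
     (\<integral>u. f (x - fst u) * g (x - snd u) \<partial>(sphere_surface_measure :: ((real^'n) \<times> (real^'n)) measure))"

definition Ls_norm_pow :: "real \<Rightarrow> (real^'n \<Rightarrow> real) \<Rightarrow> ennreal" where
  "Ls_norm_pow s h = (\<integral>\<^sup>+ x. ennreal (\<bar>h x\<bar> powr s) \<partial>lborel)"

definition L1_norm :: "(real^'n \<Rightarrow> real) \<Rightarrow> real" where
  "L1_norm h = (\<integral>x. \<bar>h x\<bar> \<partial>lborel)"

end

theory Submission
  imports Defs
begin

text \<open>
  Let \<open>F x\<close> be the mass of \<open>|f|\<close> on the ball of radius 3 about \<open>x\<close>, and let \<open>B\<^sup>+\<close> be the
  spherical average of \<open>|f|\<close> and \<open>|g|\<close>, so that \<open>|B(f,g)| \<le> B\<^sup>+\<close>. The integral of \<open>F\<close> is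
  \<open>|B\<^sub>3| \<parallel>f\<parallel>\<^sub>1\<close>, and the integral of \<open>B\<^sup>+ / F\<close> is at most \<open>K \<parallel>g\<parallel>\<^sub>1\<close>: by Tonelli and the
  substitution \<open>x = y + u\<^sub>2\<close> (with \<open>|u\<^sub>2| \<le> 1\<close>, so that \<open>F (y + u\<^sub>2)\<close> dominates the mass of
  \<open>|f|\<close> on the ball of radius 2 about \<open>y\<close>) it suffices that the image of \<open>\<sigma>\<close> under
  \<open>u \<mapsto> u\<^sub>1 - u\<^sub>2\<close> has a bounded density on the ball of radius 2. This is seen by writing \<open>\<sigma>\<close>
  through the cone over the unit ball of \<open>\<real>\<^sup>2\<^sup>d\<close> and shearing \<open>(z\<^sub>1, z\<^sub>2) = (q + p/2, q - p/2)\<close>: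
  what remains is a radial integral in \<open>|q|\<^sup>2\<close>, whose density is bounded exactly when \<open>d \<ge> 2\<close>.

  Pointwise, \<open>(x y)\<^sup>s \<le> x + y\<close> for \<open>y \<le> 1\<close> and \<open>1/2 \<le> s \<le> 1\<close> gives
  \<open>|B(f,g)|\<^sup>s \<le> (\<alpha> \<beta>)\<^sup>s (B\<^sup>+ / (\<beta> F) + F / \<alpha>)\<close> whenever \<open>\<parallel>f\<parallel>\<^sub>1 \<le> \<alpha>\<close> and \<open>\<parallel>g\<parallel>\<^sub>1 \<le> \<beta>\<close>; integrating
  gives \<open>(K + |B\<^sub>3|) (\<alpha> \<beta>)\<^sup>s\<close>, and \<open>\<alpha>, \<beta>\<close> may then decrease to the \<open>L\<^sup>1\<close> norms.
\<close>

section \<open>Elementary inequalities\<close>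

lemma ennreal_inverse_antimono: "(a::ennreal) \<le> b \<Longrightarrow> inverse b \<le> inverse a"
  including ennreal.lifting
  by transfer (auto intro: ereal_inverse_antimono)

lemma ennreal_divide_antimono_right: "(a::ennreal) \<le> b \<Longrightarrow> c / b \<le> c / a"
  unfolding divide_ennreal_def by (intro mult_left_mono ennreal_inverse_antimono) auto

lemma ennreal_mult_divide_le: "a * (b / a) \<le> (b::ennreal)"
proof (cases "a = 0 \<or> a = top")
  case True
  then show ?thesis
    by (auto simp: divide_ennreal_def)
next
  case False
  then have "a * (b / a) = b * (a / a)"
    by (simp add: divide_ennreal_def ac_simps)
  also have "\<dots> = b"
    using False by (simp add: top.not_eq_extremum)
  finally show ?thesis
    by simp
qed

lemma powr_mult_le_add:
  fixes x y s :: real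
  assumes "0 \<le> x" "0 \<le> y" "y \<le> 1" "1/2 \<le> s" "s \<le> 1"
  shows "(x * y) powr s \<le> x + y"
proof (cases "1 \<le> x * y")
  case True
  then have "(x * y) powr s \<le> (x * y) powr 1"
    using assms by (intro powr_mono) auto
  also have "\<dots> \<le> x"
    using True assms by (simp add: mult_left_le)
  finally show ?thesis
    using assms by simp
next
  case False
  then have "(x * y) powr s \<le> (x * y) powr (1/2)"
    using assms by (cases "x * y = 0") (auto intro: powr_mono')
  also have "\<dots> = sqrt (x * y)"
    using assms by (simp add: powr_half_sqrt)
  also have "\<dots> \<le> (x + y) / 2"
    using assms by (intro arith_geo_mean_sqrt) auto
  finally show ?thesis
    using assms by simp
qed

lemma powr_le_split_ennreal:
  fixes s \<alpha> \<beta> b :: real and B F :: ennreal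
  assumes s: "1/2 \<le> s" "s \<le> 1" and pos: "0 < \<alpha>" "0 < \<beta>"
    and b: "0 \<le> b" "ennreal b \<le> B" and F: "F \<le> ennreal \<alpha>"
  shows "ennreal (b powr s) \<le> ennreal ((\<alpha> * \<beta>) powr s) * (B / F / ennreal \<beta> + F / ennreal \<alpha>)"
proof (cases "b = 0 \<or> F = 0")
  case True
  show ?thesis
  proof (cases "b = 0")
    case False
    then have "B \<noteq> 0" "F = 0"
      using True b by (auto simp: ennreal_le_iff2)
    then have "B / F / ennreal \<beta> = top"
      using pos by (simp add: ennreal_divide_eq_top_iff divide_ennreal_def)
    then show ?thesis
      using pos by (simp add: ennreal_mult_top)
  qed simp
next
  case False
  then obtain \<phi> where \<phi>: "F = ennreal \<phi>" "0 < \<phi>" "\<phi> \<le> \<alpha>"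
    using F pos by (cases F) (auto simp: top_unique)
  have "b powr s = (\<alpha> * \<beta>) powr s * ((b / (\<phi> * \<beta>)) * (\<phi> / \<alpha>)) powr s"
    using pos \<phi> b by (simp add: powr_mult[symmetric])
  also have "\<dots> \<le> (\<alpha> * \<beta>) powr s * (b / (\<phi> * \<beta>) + \<phi> / \<alpha>)"
    using pos \<phi> b s by (intro mult_left_mono powr_mult_le_add) auto
  finally have "ennreal (b powr s) \<le> ennreal ((\<alpha> * \<beta>) powr s) * (ennreal b / F / ennreal \<beta> + F / ennreal \<alpha>)"
    using pos \<phi> b
    by (simp add: divide_ennreal ennreal_mult[symmetric] ennreal_plus[symmetric] del: ennreal_plus)
  also have "\<dots> \<le> ennreal ((\<alpha> * \<beta>) powr s) * (B / F / ennreal \<beta> + F / ennreal \<alpha>)"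
    using b by (intro mult_left_mono add_right_mono divide_right_mono_ennreal) auto
  finally show ?thesis .
qed

lemma le_ennreal_mult_powr_of_perturbation:
  fixes A a b s :: real and X :: ennreal
  assumes "0 \<le> a" "0 \<le> b" "0 < s"
    and le: "\<And>\<epsilon>. 0 < \<epsilon> \<Longrightarrow> X \<le> ennreal (A * ((a + \<epsilon>) * (b + \<epsilon>)) powr s)"
  shows "X \<le> ennreal (A * (a * b) powr s)"
proof (rule tendsto_lowerbound)
  have "((\<lambda>\<epsilon>. (a + \<epsilon>) * (b + \<epsilon>)) \<longlongrightarrow> (a + 0) * (b + 0)) (at_right 0)"
    by (intro tendsto_intros)
  moreover have "\<forall>\<^sub>F \<epsilon> in at_right 0. 0 \<le> (a + \<epsilon>) * (b + \<epsilon>)"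
    using eventually_at_right_less by eventually_elim (use assms in simp)
  ultimately have "((\<lambda>\<epsilon>. ((a + \<epsilon>) * (b + \<epsilon>)) powr s) \<longlongrightarrow> (a * b) powr s) (at_right 0)"
    using \<open>0 < s\<close> by (auto intro: tendsto_powr')
  then show "((\<lambda>\<epsilon>. ennreal (A * ((a + \<epsilon>) * (b + \<epsilon>)) powr s)) \<longlongrightarrow> ennreal (A * (a * b) powr s)) (at_right 0)"
    by (intro tendsto_ennrealI tendsto_mult_left)
  show "\<forall>\<^sub>F \<epsilon> in at_right 0. X \<le> ennreal (A * ((a + \<epsilon>) * (b + \<epsilon>)) powr s)"
    using eventually_at_right_less by eventually_elim (rule le)
qed simp

section \<open>Lebesgue integrals on Euclidean space\<close>

lemma real_measure_eqI_lessThan: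
  fixes M N :: "real measure"
  assumes sets: "sets M = sets borel" "sets N = sets borel"
    and fin: "\<And>x. emeasure M {..<x} < \<infinity>"
    and eq: "\<And>x. emeasure M {..<x} = emeasure N {..<x}"
  shows "M = N"
proof (rule measure_eqI_generator_eq_countable)
  let ?E = "range (lessThan :: real \<Rightarrow> real set)"
  have "{..<a} \<inter> {..<b} = {..<min a b}" for a b :: real
    by auto
  then show "Int_stable ?E"
    by (auto simp: Int_stable_def)
  show "?E \<subseteq> Pow UNIV" "sets M = sigma_sets UNIV ?E" "sets N = sigma_sets UNIV ?E"
    unfolding sets borel_Iio by auto
  show "range (\<lambda>n::nat. {..<real n}) \<subseteq> ?E" "(\<Union>n. {..<real n}) = UNIV"
    by (auto intro: reals_Archimedean2)
  show "\<And>A. A \<in> range (\<lambda>n::nat. {..<real n}) \<Longrightarrow> emeasure M A \<noteq> \<infinity>"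
    using fin by (auto simp: less_top)
qed (auto intro: eq)

lemma nn_integral_powr_greaterThanLessThan:
  fixes e x :: real
  assumes "e > -1" "x > 0"
  shows "(\<integral>\<^sup>+ u. ennreal (u powr e) * indicator {0<..<x} u \<partial>lborel) = ennreal (x powr (e + 1) / (e + 1))"
  using has_integral_powr_from_0[of e x] assms
  by (intro nn_integral_has_integral_lebesgue') (auto simp: has_integral_Icc_iff_Ioo)

lemma distr_lborel_norm_power2:
  "distr (lborel :: 'a::euclidean_space measure) borel (\<lambda>q. (norm q)\<^sup>2) =
   density lborel (\<lambda>u. ennreal (unit_ball_vol DIM('a) * DIM('a) / 2 * u powr (DIM('a) / 2 - 1)) * indicator {0<..} u)"
  (is "?M = density lborel ?\<rho>")
proof (rule real_measure_eqI_lessThan)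
  let ?d = "real DIM('a)"
  have preimage: "(\<lambda>q::'a. (norm q)\<^sup>2) -` {..<x} = (if x \<le> 0 then {} else ball 0 (sqrt x))" for x
  proof -
    have "(norm q)\<^sup>2 < x \<longleftrightarrow> 0 < x \<and> norm q < sqrt x" for q :: 'a
      by (metis abs_norm_cancel order.strict_trans1 real_sqrt_abs real_sqrt_less_iff zero_le_power2)
    then show ?thesis
      by (auto simp: mem_ball_0)
  qed
  have M: "emeasure ?M {..<x} = (if x \<le> 0 then 0 else ennreal (unit_ball_vol ?d * x powr (?d / 2)))" for x
    by (auto simp: emeasure_distr preimage emeasure_ball powr_half_sqrt_powr powr_realpow real_sqrt_power)
  show "emeasure ?M {..<x} < \<infinity>" for x
    by (simp add: M)
  show "emeasure ?M {..<x} = emeasure (density lborel ?\<rho>) {..<x}" for x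
  proof (cases "x \<le> 0")
    case True
    have "emeasure (density lborel ?\<rho>) {..<x} = (\<integral>\<^sup>+ u. ?\<rho> u * indicator {..<x} u \<partial>lborel)"
      by (rule emeasure_density) auto
    also have "\<dots> = (\<integral>\<^sup>+ (u::real). 0 \<partial>lborel)"
      using True by (intro nn_integral_cong) (auto simp: indicator_def)
    finally show ?thesis
      using True by (simp add: M)
  next
    case False
    have "emeasure (density lborel ?\<rho>) {..<x} =
        ennreal (unit_ball_vol ?d * ?d / 2) * (\<integral>\<^sup>+ u. ennreal (u powr (?d / 2 - 1)) * indicator {0<..<x} u \<partial>lborel)"
      by (subst nn_integral_cmult[symmetric])
        (auto simp: emeasure_density ennreal_mult[symmetric] indicator_def intro!: nn_integral_cong)
    also have "\<dots> = ennreal (unit_ball_vol ?d * x powr (?d / 2))"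
      using False DIM_positive[where 'a='a]
      by (simp add: nn_integral_powr_greaterThanLessThan ennreal_mult'[symmetric])
    finally show ?thesis
      using False by (simp add: M)
  qed
qed auto

lemma nn_integral_lborel_norm_power2_le:
  fixes \<Phi> :: "real \<Rightarrow> ennreal"
  assumes [measurable]: "\<Phi> \<in> borel_measurable borel" and dim: "DIM('a) \<ge> 2"
    and vanish: "\<And>u. u \<ge> 1 \<Longrightarrow> \<Phi> u = 0"
  shows "(\<integral>\<^sup>+ (q::'a::euclidean_space). \<Phi> ((norm q)\<^sup>2) \<partial>lborel) \<le>
    ennreal (unit_ball_vol DIM('a) * DIM('a) / 2) * (\<integral>\<^sup>+ u. \<Phi> u * indicator {0<..} u \<partial>lborel)"
proof -
  let ?c = "unit_ball_vol DIM('a) * DIM('a) / 2"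
  have "(\<integral>\<^sup>+ (q::'a). \<Phi> ((norm q)\<^sup>2) \<partial>lborel) = (\<integral>\<^sup>+ u. \<Phi> u \<partial>distr (lborel::'a measure) borel (\<lambda>q. (norm q)\<^sup>2))"
    by (subst nn_integral_distr) auto
  also have "\<dots> = (\<integral>\<^sup>+ u. ennreal (?c * u powr (DIM('a) / 2 - 1)) * indicator {0<..} u * \<Phi> u \<partial>lborel)"
    unfolding distr_lborel_norm_power2 by (subst nn_integral_density) auto
  also have "\<dots> \<le> (\<integral>\<^sup>+ u. ennreal ?c * (\<Phi> u * indicator {0<..} u) \<partial>lborel)"
  proof (rule nn_integral_mono)
    fix u :: real
    show "ennreal (?c * u powr (DIM('a) / 2 - 1)) * indicator {0<..} u * \<Phi> u \<le> ennreal ?c * (\<Phi> u * indicator {0<..} u)"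
    proof (cases "0 < u \<and> u < 1")
      case True
      then have "u powr (DIM('a) / 2 - 1) \<le> 1"
        using dim by (intro powr_le1) auto
      then have "ennreal (?c * u powr (DIM('a) / 2 - 1)) * \<Phi> u \<le> ennreal ?c * \<Phi> u"
        by (intro mult_right_mono ennreal_leI mult_left_le) auto
      then show ?thesis
        using True by simp
    next
      case False
      then show ?thesis
        using vanish[of u] by (auto simp: indicator_def)
    qed
  qed
  also have "\<dots> = ennreal ?c * (\<integral>\<^sup>+ u. \<Phi> u * indicator {0<..} u \<partial>lborel)"
    by (rule nn_integral_cmult) auto
  finally show ?thesis .
qed

lemma nn_integral_lborel_translate:
  fixes f :: "'a::euclidean_space \<Rightarrow> ennreal"
  assumes [measurable]: "f \<in> borel_measurable borel"
  shows "(\<integral>\<^sup>+ x. f (c + x) \<partial>lborel) = (\<integral>\<^sup>+ x. f x \<partial>lborel)"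
  by (subst lborel_distr_plus[symmetric, of c]) (simp add: nn_integral_distr)

lemma nn_integral_lborel_scaleR:
  fixes f :: "'a::euclidean_space \<Rightarrow> ennreal"
  assumes [measurable]: "f \<in> borel_measurable borel" and "c \<noteq> 0"
  shows "(\<integral>\<^sup>+ x. f x \<partial>lborel) = ennreal (\<bar>c\<bar> ^ DIM('a)) * (\<integral>\<^sup>+ x. f (c *\<^sub>R x) \<partial>lborel)"
proof -
  have "(\<integral>\<^sup>+ x. f x \<partial>lborel) =
      (\<integral>\<^sup>+ x. f x \<partial>density (distr lborel borel (\<lambda>x. 0 + c *\<^sub>R x)) (\<lambda>_. \<bar>c\<bar> ^ DIM('a)))"
    using lborel_affine[where t="0::'a", OF \<open>c \<noteq> 0\<close>] by simp
  also have "\<dots> = (\<integral>\<^sup>+ x. ennreal (\<bar>c\<bar> ^ DIM('a)) * f (c *\<^sub>R x) \<partial>lborel)"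
    by (simp add: nn_integral_density nn_integral_distr)
  finally show ?thesis
    by (simp add: nn_integral_cmult)
qed

lemma nn_integral_lborel_reflect:
  fixes f :: "'a::euclidean_space \<Rightarrow> ennreal"
  assumes [measurable]: "f \<in> borel_measurable borel"
  shows "(\<integral>\<^sup>+ x. f (b - x) \<partial>lborel) = (\<integral>\<^sup>+ x. f x \<partial>lborel)"
  using nn_integral_lborel_scaleR[of "\<lambda>x. f (b + x)" "-1"]
  by (simp add: nn_integral_lborel_translate)

lemma nn_integral_lborel_dilation_le:
  fixes f :: "'a::euclidean_space \<Rightarrow> ennreal"
  assumes [measurable]: "f \<in> borel_measurable borel" and "0 < t" "t \<le> 1"
  shows "(\<integral>\<^sup>+ x. f (x /\<^sub>R t) \<partial>lborel) \<le> (\<integral>\<^sup>+ x. f x \<partial>lborel)"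
proof -
  have "(\<integral>\<^sup>+ x. f (x /\<^sub>R t) \<partial>lborel) = ennreal (t ^ DIM('a)) * (\<integral>\<^sup>+ x. f x \<partial>lborel)"
    using nn_integral_lborel_scaleR[of "\<lambda>x. f (x /\<^sub>R t)" t] assms by simp
  also have "\<dots> \<le> (\<integral>\<^sup>+ x. f x \<partial>lborel)"
    using assms mult_right_mono[of "ennreal (t ^ DIM('a))" 1] by (simp add: power_le_one)
  finally show ?thesis .
qed

lemma nn_integral_lborel_pair_shear:
  fixes G :: "'a::euclidean_space \<Rightarrow> 'a \<Rightarrow> ennreal"
  assumes [measurable]: "case_prod G \<in> borel_measurable (lborel \<Otimes>\<^sub>M lborel)"
  shows "(\<integral>\<^sup>+ z1. \<integral>\<^sup>+ z2. G z1 z2 \<partial>lborel \<partial>lborel) =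
    (\<integral>\<^sup>+ p. \<integral>\<^sup>+ q. G (q + (1/2) *\<^sub>R p) (q - (1/2) *\<^sub>R p) \<partial>lborel \<partial>lborel)"
proof -
  have "(\<integral>\<^sup>+ z1. \<integral>\<^sup>+ z2. G z1 z2 \<partial>lborel \<partial>lborel) = (\<integral>\<^sup>+ z2. \<integral>\<^sup>+ z1. G z1 z2 \<partial>lborel \<partial>lborel)"
    by (rule lborel_pair.Fubini'[symmetric]) measurable
  also have "\<dots> = (\<integral>\<^sup>+ z2. \<integral>\<^sup>+ p. G (z2 + p) z2 \<partial>lborel \<partial>lborel)"
    by (intro nn_integral_cong nn_integral_lborel_translate[symmetric]) measurable
  also have "\<dots> = (\<integral>\<^sup>+ p. \<integral>\<^sup>+ z2. G (z2 + p) z2 \<partial>lborel \<partial>lborel)"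
    by (rule lborel_pair.Fubini') measurable
  also have "\<dots> = (\<integral>\<^sup>+ p. \<integral>\<^sup>+ q. G ((- (1/2) *\<^sub>R p + q) + p) (- (1/2) *\<^sub>R p + q) \<partial>lborel \<partial>lborel)"
    by (intro nn_integral_cong nn_integral_lborel_translate[symmetric]) measurable
  also have "\<dots> = (\<integral>\<^sup>+ p. \<integral>\<^sup>+ q. G (q + (1/2) *\<^sub>R p) (q - (1/2) *\<^sub>R p) \<partial>lborel \<partial>lborel)"
  proof -
    have "(- (1/2) *\<^sub>R p + q) + p = q + (1/2) *\<^sub>R p" "- (1/2) *\<^sub>R p + q = q - (1/2) *\<^sub>R p"
      for p q :: 'a
      using scaleR_half_double[of p] by (simp_all add: algebra_simps)
    then show ?thesis
      by (simp only:)
  qed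
  finally show ?thesis .
qed

lemma nn_integral_lborel_norm_power2_affine_le:
  fixes K :: "real \<Rightarrow> ennreal" and \<kappa> :: real
  assumes [measurable]: "K \<in> borel_measurable borel" and dim: "DIM('a) \<ge> 2" and "0 \<le> \<kappa>"
  shows "(\<integral>\<^sup>+ (q::'a::euclidean_space). K (2 * (norm q)\<^sup>2 + \<kappa>) * indicator {..<1} (2 * (norm q)\<^sup>2 + \<kappa>) \<partial>lborel)
    \<le> ennreal (unit_ball_vol DIM('a) * DIM('a) / 4) * (\<integral>\<^sup>+ \<tau>\<in>{\<kappa><..<1}. K \<tau> \<partial>lborel)"
proof -
  let ?c = "unit_ball_vol DIM('a) * DIM('a) / 2"
  let ?\<Phi> = "\<lambda>u. K (2 * u + \<kappa>) * indicator {..<1} (2 * u + \<kappa>)"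
  have "(\<integral>\<^sup>+ (q::'a). ?\<Phi> ((norm q)\<^sup>2) \<partial>lborel) \<le> ennreal ?c * (\<integral>\<^sup>+ u. ?\<Phi> u * indicator {0<..} u \<partial>lborel)"
    using \<open>0 \<le> \<kappa>\<close> by (intro nn_integral_lborel_norm_power2_le dim) (auto simp: indicator_def)
  also have "(\<integral>\<^sup>+ u. ?\<Phi> u * indicator {0<..} u \<partial>lborel) = (\<integral>\<^sup>+ u. K (\<kappa> + 2 * u) * indicator {\<kappa><..<1} (\<kappa> + 2 * u) \<partial>lborel)"
    by (intro nn_integral_cong) (auto simp: indicator_def add.commute)
  also have "\<dots> = ennreal (1/2) * (\<integral>\<^sup>+ \<tau>\<in>{\<kappa><..<1}. K \<tau> \<partial>lborel)"
    using nn_integral_real_affine[of "\<lambda>\<tau>. K \<tau> * indicator {\<kappa><..<1} \<tau>" 2 \<kappa>]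
    by (simp add: mult.assoc[symmetric] ennreal_numeral[symmetric] ennreal_mult[symmetric]
        del: ennreal_numeral ennreal_half)
  finally show ?thesis
    by (simp add: mult.assoc[symmetric] ennreal_mult[symmetric] del: ennreal_half)
qed

lemma shear_diff:
  fixes p q :: "'a::real_vector"
  shows "(q + (1/2) *\<^sub>R p) - (q - (1/2) *\<^sub>R p) = p"
proof -
  have "(q + (1/2) *\<^sub>R p) - (q - (1/2) *\<^sub>R p) = (1/2) *\<^sub>R (p + p)"
    by (simp add: algebra_simps)
  then show ?thesis
    by (simp only: scaleR_half_double)
qed

lemma norm_Pair_shear:
  fixes p q :: "'a::real_inner"
  shows "norm (q + (1/2) *\<^sub>R p, q - (1/2) *\<^sub>R p) = sqrt (2 * (norm q)\<^sup>2 + (norm p)\<^sup>2 / 2)"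
proof -
  have "(norm (q + (1/2) *\<^sub>R p))\<^sup>2 + (norm (q - (1/2) *\<^sub>R p))\<^sup>2 = 2 * (norm q)\<^sup>2 + (norm p)\<^sup>2 / 2"
    by (simp add: power2_norm_eq_inner inner_simps algebra_simps)
  then show ?thesis
    by (simp only: norm_Pair)
qed

lemma nn_integral_rescale_sqrt_le:
  fixes H :: "'a::euclidean_space \<Rightarrow> ennreal"
  assumes [measurable]: "H \<in> borel_measurable borel"
  shows "(\<integral>\<^sup>+ p. H (p /\<^sub>R sqrt \<tau>) * indicator {(norm p)\<^sup>2 / 2<..<1} \<tau> \<partial>lborel)
    \<le> (\<integral>\<^sup>+ w\<in>ball 0 2. H w \<partial>lborel) * indicator {0<..<1} \<tau>"
proof (cases "0 < \<tau> \<and> \<tau> < 1")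
  case True
  have "norm (p /\<^sub>R sqrt \<tau>) < 2" if "(norm p)\<^sup>2 < 2 * \<tau>" for p :: 'a
  proof -
    have "(norm (p /\<^sub>R sqrt \<tau>))\<^sup>2 = (norm p)\<^sup>2 / \<tau>"
      using True by (simp add: power_mult_distrib power_inverse divide_inverse mult.commute)
    also have "\<dots> < 2\<^sup>2"
      using True that by (simp add: divide_less_eq)
    finally show ?thesis
      by (rule power_less_imp_less_base) simp
  qed
  then have "(\<integral>\<^sup>+ p. H (p /\<^sub>R sqrt \<tau>) * indicator {(norm p)\<^sup>2 / 2<..<1} \<tau> \<partial>lborel)
      \<le> (\<integral>\<^sup>+ p. H (p /\<^sub>R sqrt \<tau>) * indicator (ball 0 2) (p /\<^sub>R sqrt \<tau>) \<partial>lborel)"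
    by (intro nn_integral_mono) (auto simp: indicator_def)
  also have "\<dots> \<le> (\<integral>\<^sup>+ w\<in>ball 0 2. H w \<partial>lborel)"
    using True
    by (intro nn_integral_lborel_dilation_le borel_measurable_times_ennreal borel_measurable_indicator) auto
  finally show ?thesis
    using True by simp
next
  case False
  then have "H (p /\<^sub>R sqrt \<tau>) * indicator {(norm p)\<^sup>2 / 2<..<1} \<tau> = 0" for p :: 'a
    by (auto simp: indicator_def) (smt (verit) zero_le_power2)
  then show ?thesis
    by (simp del: mult_eq_0_iff)
qed

lemma nn_integral_ball_difference_le:
  fixes H :: "'a::euclidean_space \<Rightarrow> ennreal"
  assumes [measurable]: "H \<in> borel_measurable borel" and dim: "DIM('a) \<ge> 2"
  shows "(\<integral>\<^sup>+ z\<in>ball (0::'a \<times> 'a) 1. H ((fst z - snd z) /\<^sub>R norm z) \<partial>lborel)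
    \<le> ennreal (unit_ball_vol DIM('a) * DIM('a) / 4) * (\<integral>\<^sup>+ w\<in>ball 0 2. H w \<partial>lborel)"
proof -
  let ?c = "unit_ball_vol DIM('a) * DIM('a) / 4"
  let ?J = "\<integral>\<^sup>+ w\<in>ball 0 2. H w \<partial>lborel"
  define G where "G z1 z2 = H ((z1 - z2) /\<^sub>R norm (z1, z2)) * indicator (ball 0 1) (z1, z2)" for z1 z2 :: 'a
  define \<Psi> where "\<Psi> p \<tau> = H (p /\<^sub>R sqrt \<tau>) * indicator {(norm p)\<^sup>2 / 2<..<1} \<tau>" for p :: 'a and \<tau> :: real
  have [measurable]: "case_prod G \<in> borel_measurable (lborel \<Otimes>\<^sub>M lborel)"
    unfolding G_def indicator_def mem_ball_0 by measurable
  have [measurable]: "case_prod \<Psi> \<in> borel_measurable (lborel \<Otimes>\<^sub>M lborel)"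
    unfolding \<Psi>_def indicator_def greaterThanLessThan_iff by measurable
  have Fubini: "(\<integral>\<^sup>+ \<tau>. \<integral>\<^sup>+ p. \<Psi> p \<tau> \<partial>lborel \<partial>lborel) = (\<integral>\<^sup>+ p. \<integral>\<^sup>+ \<tau>. \<Psi> p \<tau> \<partial>lborel \<partial>lborel)"
    by (rule lborel_pair.Fubini') measurable
  have "(\<integral>\<^sup>+ z\<in>ball (0::'a \<times> 'a) 1. H ((fst z - snd z) /\<^sub>R norm z) \<partial>lborel) =
      (\<integral>\<^sup>+ z. G (fst z) (snd z) \<partial>(lborel \<Otimes>\<^sub>M lborel))"
    by (simp add: lborel_prod G_def)
  also have "\<dots> = (\<integral>\<^sup>+ z1. \<integral>\<^sup>+ z2. G z1 z2 \<partial>lborel \<partial>lborel)"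
    by (subst lborel.nn_integral_fst[symmetric]) (auto simp: split_beta')
  also have "\<dots> = (\<integral>\<^sup>+ p. \<integral>\<^sup>+ q. G (q + (1/2) *\<^sub>R p) (q - (1/2) *\<^sub>R p) \<partial>lborel \<partial>lborel)"
    by (rule nn_integral_lborel_pair_shear) measurable
  also have "\<dots> \<le> (\<integral>\<^sup>+ p. ennreal ?c * (\<integral>\<^sup>+ \<tau>. \<Psi> p \<tau> \<partial>lborel) \<partial>lborel)"
  proof (intro nn_integral_mono)
    fix p :: 'a
    have "(\<lambda>\<tau>. H (p /\<^sub>R sqrt \<tau>)) \<in> borel_measurable borel"
      by measurable
    from nn_integral_lborel_norm_power2_affine_le[OF this dim, of "(norm p)\<^sup>2 / 2"]
    show "(\<integral>\<^sup>+ q. G (q + (1/2) *\<^sub>R p) (q - (1/2) *\<^sub>R p) \<partial>lborel) \<le> ennreal ?c * (\<integral>\<^sup>+ \<tau>. \<Psi> p \<tau> \<partial>lborel)"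
      unfolding G_def \<Psi>_def shear_diff by (simp add: indicator_def mem_ball_0 norm_Pair_shear)
  qed
  also have "\<dots> = ennreal ?c * (\<integral>\<^sup>+ \<tau>. \<integral>\<^sup>+ p. \<Psi> p \<tau> \<partial>lborel \<partial>lborel)"
    unfolding Fubini by (rule nn_integral_cmult) measurable
  also have "\<dots> \<le> ennreal ?c * (\<integral>\<^sup>+ (\<tau>::real). ?J * indicator {0<..<1} \<tau> \<partial>lborel)"
    unfolding \<Psi>_def by (intro mult_left_mono nn_integral_mono nn_integral_rescale_sqrt_le) auto
  also have "\<dots> = ennreal ?c * ?J"
    by (simp add: nn_integral_cmult_indicator)
  finally show ?thesis .
qed

lemma borel_measurable_fst [measurable]:
  "fst \<in> borel_measurable (borel :: ('a::euclidean_space \<times> 'b::euclidean_space) measure)"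
  by (intro borel_measurable_continuous_onI continuous_on_fst continuous_on_id)

lemma borel_measurable_snd [measurable]:
  "snd \<in> borel_measurable (borel :: ('a::euclidean_space \<times> 'b::euclidean_space) measure)"
  by (intro borel_measurable_continuous_onI continuous_on_snd continuous_on_id)

section \<open>The surface measure of the sphere\<close>

lemma sets_sphere_surface_measure [measurable_cong]:
  "sets (sphere_surface_measure :: 'a::euclidean_space measure) = sets borel"
  by (simp add: sphere_surface_measure_def)

lemma nn_integral_sphere_surface_measure:
  fixes \<phi> :: "'a::euclidean_space \<Rightarrow> ennreal"
  assumes [measurable]: "\<phi> \<in> borel_measurable borel"
  shows "(\<integral>\<^sup>+ u. \<phi> u \<partial>sphere_surface_measure) =
    ennreal DIM('a) * (\<integral>\<^sup>+ z\<in>ball 0 1. \<phi> (z /\<^sub>R norm z) \<partial>lborel)"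
proof -
  have "(\<integral>\<^sup>+ u. \<phi> u \<partial>sphere_surface_measure) =
      (\<integral>\<^sup>+ z. \<phi> (z /\<^sub>R norm z) \<partial>density lborel (\<lambda>y. ennreal DIM('a) * indicator (ball 0 1) y))"
    unfolding sphere_surface_measure_def by (rule nn_integral_distr) auto
  also have "\<dots> = (\<integral>\<^sup>+ z. ennreal DIM('a) * indicator (ball 0 1) z * \<phi> (z /\<^sub>R norm z) \<partial>lborel)"
    by (intro nn_integral_density borel_measurable_times_ennreal borel_measurable_indicator) auto
  also have "\<dots> = ennreal DIM('a) * (\<integral>\<^sup>+ z\<in>ball 0 1. \<phi> (z /\<^sub>R norm z) \<partial>lborel)"
    by (subst nn_integral_cmult[symmetric])
      (auto simp: ac_simps intro!: borel_measurable_times_ennreal borel_measurable_indicator measurable_compose[OF _ assms])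
  finally show ?thesis .
qed

lemma finite_measure_sphere_surface_measure:
  "finite_measure (sphere_surface_measure :: 'a::euclidean_space measure)"
proof (rule finite_measureI)
  have "emeasure (sphere_surface_measure :: 'a measure) (space sphere_surface_measure) =
      (\<integral>\<^sup>+ (u::'a). 1 \<partial>sphere_surface_measure)"
    by simp
  also have "\<dots> = ennreal DIM('a) * emeasure lborel (ball (0::'a) 1)"
    by (subst nn_integral_sphere_surface_measure) auto
  also have "\<dots> < \<infinity>"
    using emeasure_lborel_ball_finite[of "0::'a" 1] by (simp add: ennreal_mult_less_top)
  finally show "emeasure (sphere_surface_measure :: 'a measure) (space sphere_surface_measure) \<noteq> \<infinity>"
    by simp
qed

lemma AE_sphere_surface_measure_norm_le:
  "AE u in (sphere_surface_measure :: 'a::euclidean_space measure). norm u \<le> 1"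
proof -
  have "norm (y /\<^sub>R norm y) \<le> 1" for y :: 'a
    by (cases "y = 0") auto
  then show ?thesis
    unfolding sphere_surface_measure_def by (subst AE_distr_iff) auto
qed

lemma nn_integral_sphere_difference_le:
  fixes H :: "'a::euclidean_space \<Rightarrow> ennreal"
  assumes [measurable]: "H \<in> borel_measurable borel" and dim: "DIM('a) \<ge> 2"
  shows "(\<integral>\<^sup>+ u. H (fst u - snd u) \<partial>(sphere_surface_measure :: ('a \<times> 'a) measure))
    \<le> ennreal ((DIM('a))\<^sup>2 * unit_ball_vol DIM('a) / 2) * (\<integral>\<^sup>+ w\<in>ball 0 2. H w \<partial>lborel)"
proof -
  have "(\<integral>\<^sup>+ u. H (fst u - snd u) \<partial>(sphere_surface_measure :: ('a \<times> 'a) measure)) =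
      ennreal (2 * DIM('a)) * (\<integral>\<^sup>+ z\<in>ball (0::'a \<times> 'a) 1. H ((fst z - snd z) /\<^sub>R norm z) \<partial>lborel)"
    by (subst nn_integral_sphere_surface_measure) (simp_all add: scaleR_diff_right)
  also have "\<dots> \<le> ennreal (2 * DIM('a)) *
      (ennreal (unit_ball_vol DIM('a) * DIM('a) / 4) * (\<integral>\<^sup>+ w\<in>ball 0 2. H w \<partial>lborel))"
    by (intro mult_left_mono nn_integral_ball_difference_le dim) auto
  also have "\<dots> = ennreal ((DIM('a))\<^sup>2 * unit_ball_vol DIM('a) / 2) * (\<integral>\<^sup>+ w\<in>ball 0 2. H w \<partial>lborel)"
    by (simp add: mult.assoc[symmetric] ennreal_mult[symmetric] power2_eq_square)
  finally show ?thesis .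
qed

section \<open>The bilinear spherical average\<close>

definition ball_mass :: "('a::euclidean_space \<Rightarrow> real) \<Rightarrow> real \<Rightarrow> 'a \<Rightarrow> ennreal" where
  "ball_mass f r x = (\<integral>\<^sup>+ y\<in>ball x r. ennreal \<bar>f y\<bar> \<partial>lborel)"

definition nn_bilinear_spherical_avg ::
  "('a::euclidean_space \<Rightarrow> real) \<Rightarrow> ('a \<Rightarrow> real) \<Rightarrow> 'a \<Rightarrow> ennreal" where
  "nn_bilinear_spherical_avg f g x =
     (\<integral>\<^sup>+ u. ennreal (\<bar>f (x - fst u)\<bar> * \<bar>g (x - snd u)\<bar>) \<partial>(sphere_surface_measure :: ('a \<times> 'a) measure))"

lemma borel_measurable_ball_mass [measurable]:
  assumes [measurable]: "f \<in> borel_measurable borel"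
  shows "ball_mass f r \<in> borel_measurable borel"
proof -
  have "(\<lambda>x. ball_mass f r x) \<in> borel_measurable lborel"
    unfolding ball_mass_def indicator_def mem_ball by measurable
  then show ?thesis
    by simp
qed

lemma borel_measurable_nn_bilinear_spherical_avg [measurable]:
  assumes [measurable]: "f \<in> borel_measurable borel" "g \<in> borel_measurable borel"
  shows "nn_bilinear_spherical_avg f g \<in> borel_measurable borel"
proof -
  interpret finite_measure "sphere_surface_measure :: ('a \<times> 'a) measure"
    by (rule finite_measure_sphere_surface_measure)
  have "(\<lambda>x. nn_bilinear_spherical_avg f g x) \<in> borel_measurable lborel"
    unfolding nn_bilinear_spherical_avg_def by measurable
  then show ?thesis
    by simp
qed

lemma abs_bilinear_spherical_avg_le:
  fixes f g :: "real^'n \<Rightarrow> real"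
  shows "ennreal \<bar>bilinear_spherical_avg f g x\<bar> \<le> nn_bilinear_spherical_avg f g x"
proof (cases "integrable (sphere_surface_measure :: ((real^'n) \<times> (real^'n)) measure)
    (\<lambda>u. f (x - fst u) * g (x - snd u))")
  case True
  then show ?thesis
    using integral_norm_bound_ennreal[OF True]
    by (simp add: bilinear_spherical_avg_def nn_bilinear_spherical_avg_def abs_mult)
qed (simp add: bilinear_spherical_avg_def not_integrable_integral_eq)

lemma ball_mass_le_nn_integral: "ball_mass f r x \<le> (\<integral>\<^sup>+ y. ennreal \<bar>f y\<bar> \<partial>lborel)"
  unfolding ball_mass_def by (intro nn_integral_mono) (simp add: indicator_def)

lemma ball_mass_mono: "ball x r \<subseteq> ball y R \<Longrightarrow> ball_mass f r x \<le> ball_mass f R y"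
  unfolding ball_mass_def by (intro nn_integral_mono mult_left_mono) (auto simp: indicator_def)

lemma nn_integral_ball_mass:
  fixes f :: "'a::euclidean_space \<Rightarrow> real"
  assumes [measurable]: "f \<in> borel_measurable borel" and "0 \<le> r"
  shows "(\<integral>\<^sup>+ x. ball_mass f r x \<partial>lborel) =
    ennreal (unit_ball_vol DIM('a) * r ^ DIM('a)) * (\<integral>\<^sup>+ y. ennreal \<bar>f y\<bar> \<partial>lborel)"
proof -
  have [measurable]: "(\<lambda>(x, y). ennreal \<bar>f y\<bar> * indicator (ball x r) y) \<in> borel_measurable (lborel \<Otimes>\<^sub>M lborel)"
    unfolding indicator_def mem_ball by measurable
  have "(\<integral>\<^sup>+ x. ball_mass f r x \<partial>lborel) = (\<integral>\<^sup>+ y. \<integral>\<^sup>+ x. ennreal \<bar>f y\<bar> * indicator (ball x r) y \<partial>lborel \<partial>lborel)"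
    unfolding ball_mass_def by (rule lborel_pair.Fubini'[symmetric]) measurable
  also have "\<dots> = (\<integral>\<^sup>+ y. ennreal \<bar>f y\<bar> * emeasure lborel (ball y r) \<partial>lborel)"
    by (intro nn_integral_cong) (simp add: nn_integral_cmult_indicator[symmetric] indicator_def dist_commute)
  also have "\<dots> = ennreal (unit_ball_vol DIM('a) * r ^ DIM('a)) * (\<integral>\<^sup>+ y. ennreal \<bar>f y\<bar> \<partial>lborel)"
    using \<open>0 \<le> r\<close> by (simp add: emeasure_ball nn_integral_multc mult.commute)
  finally show ?thesis .
qed

lemma nn_integral_ball_reflect_eq_ball_mass:
  fixes f :: "'a::euclidean_space \<Rightarrow> real"
  assumes [measurable]: "f \<in> borel_measurable borel"
  shows "(\<integral>\<^sup>+ w\<in>ball 0 r. ennreal \<bar>f (b - w)\<bar> \<partial>lborel) = ball_mass f r b"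
proof -
  have "indicator (ball b r) (b - w) = (indicator (ball 0 r) w :: ennreal)" for w :: 'a
    by (simp add: indicator_def dist_norm)
  moreover have "(\<lambda>y. ennreal \<bar>f y\<bar> * indicator (ball b r) y) \<in> borel_measurable borel"
    by (intro borel_measurable_times_ennreal borel_measurable_indicator) auto
  ultimately show ?thesis
    using nn_integral_lborel_reflect[of "\<lambda>y. ennreal \<bar>f y\<bar> * indicator (ball b r) y" b]
    by (simp add: ball_mass_def)
qed

lemma nn_integral_sphere_difference_le_ball_mass:
  fixes f :: "'a::euclidean_space \<Rightarrow> real"
  assumes [measurable]: "f \<in> borel_measurable borel" and "DIM('a) \<ge> 2"
  shows "(\<integral>\<^sup>+ u. ennreal \<bar>f (b - (fst u - snd u))\<bar> \<partial>(sphere_surface_measure :: ('a \<times> 'a) measure))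
    \<le> ennreal ((DIM('a))\<^sup>2 * unit_ball_vol DIM('a) / 2) * ball_mass f 2 b"
  using nn_integral_sphere_difference_le[of "\<lambda>w. ennreal \<bar>f (b - w)\<bar>"] assms
  by (simp add: nn_integral_ball_reflect_eq_ball_mass)

lemma nn_integral_translate_div_ball_mass_le:
  fixes f g :: "'a::euclidean_space \<Rightarrow> real"
  assumes [measurable]: "f \<in> borel_measurable borel" "g \<in> borel_measurable borel" and "norm v \<le> 1"
  shows "(\<integral>\<^sup>+ x. ennreal (\<bar>f (x - w)\<bar> * \<bar>g (x - v)\<bar>) / ball_mass f 3 x \<partial>lborel)
    \<le> (\<integral>\<^sup>+ b. ennreal (\<bar>f (b - (w - v))\<bar> * \<bar>g b\<bar>) / ball_mass f 2 b \<partial>lborel)"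
proof -
  have "ball b 2 \<subseteq> ball (v + b) 3" for b
  proof
    fix y
    assume "y \<in> ball b 2"
    then show "y \<in> ball (v + b) 3"
      using \<open>norm v \<le> 1\<close> norm_triangle_ineq[of v "b - y"] by (simp add: dist_norm algebra_simps)
  qed
  then have "ball_mass f 2 b \<le> ball_mass f 3 (v + b)" for b
    by (rule ball_mass_mono)
  then have "ennreal (\<bar>f (v + b - w)\<bar> * \<bar>g (v + b - v)\<bar>) / ball_mass f 3 (v + b)
      \<le> ennreal (\<bar>f (b - (w - v))\<bar> * \<bar>g b\<bar>) / ball_mass f 2 b" for b
    by (simp add: ennreal_divide_antimono_right algebra_simps)
  then have "(\<integral>\<^sup>+ b. ennreal (\<bar>f (v + b - w)\<bar> * \<bar>g (v + b - v)\<bar>) / ball_mass f 3 (v + b) \<partial>lborel)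
      \<le> (\<integral>\<^sup>+ b. ennreal (\<bar>f (b - (w - v))\<bar> * \<bar>g b\<bar>) / ball_mass f 2 b \<partial>lborel)"
    by (rule nn_integral_mono)
  then show ?thesis
    by (subst (asm) nn_integral_lborel_translate) measurable
qed

lemma nn_integral_sphere_difference_div_ball_mass_le:
  fixes f g :: "'a::euclidean_space \<Rightarrow> real"
  assumes [measurable]: "f \<in> borel_measurable borel" "g \<in> borel_measurable borel"
    and dim: "DIM('a) \<ge> 2"
  shows "(\<integral>\<^sup>+ b. \<integral>\<^sup>+ u. ennreal (\<bar>f (b - (fst u - snd u))\<bar> * \<bar>g b\<bar>) / ball_mass f 2 b
      \<partial>(sphere_surface_measure :: ('a \<times> 'a) measure) \<partial>lborel)
    \<le> ennreal ((DIM('a))\<^sup>2 * unit_ball_vol DIM('a) / 2) * (\<integral>\<^sup>+ y. ennreal \<bar>g y\<bar> \<partial>lborel)"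
proof -
  let ?\<sigma> = "sphere_surface_measure :: ('a \<times> 'a) measure"
  let ?K = "(DIM('a))\<^sup>2 * unit_ball_vol DIM('a) / 2"
  interpret \<sigma>: finite_measure ?\<sigma>
    by (rule finite_measure_sphere_surface_measure)
  have "(\<integral>\<^sup>+ b. \<integral>\<^sup>+ u. ennreal (\<bar>f (b - (fst u - snd u))\<bar> * \<bar>g b\<bar>) / ball_mass f 2 b \<partial>?\<sigma> \<partial>lborel) =
      (\<integral>\<^sup>+ b. (\<integral>\<^sup>+ u. ennreal \<bar>f (b - (fst u - snd u))\<bar> \<partial>?\<sigma>) * (ennreal \<bar>g b\<bar> / ball_mass f 2 b) \<partial>lborel)"
  proof (intro nn_integral_cong)
    fix b :: 'a
    have "(\<integral>\<^sup>+ u. ennreal (\<bar>f (b - (fst u - snd u))\<bar> * \<bar>g b\<bar>) / ball_mass f 2 b \<partial>?\<sigma>) =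
        (\<integral>\<^sup>+ u. ennreal \<bar>f (b - (fst u - snd u))\<bar> * (ennreal \<bar>g b\<bar> / ball_mass f 2 b) \<partial>?\<sigma>)"
      by (intro nn_integral_cong) (simp add: ennreal_mult[OF abs_ge_zero abs_ge_zero] divide_ennreal_def mult.assoc)
    also have "\<dots> = (\<integral>\<^sup>+ u. ennreal \<bar>f (b - (fst u - snd u))\<bar> \<partial>?\<sigma>) * (ennreal \<bar>g b\<bar> / ball_mass f 2 b)"
      by (rule nn_integral_multc) measurable
    finally show "(\<integral>\<^sup>+ u. ennreal (\<bar>f (b - (fst u - snd u))\<bar> * \<bar>g b\<bar>) / ball_mass f 2 b \<partial>?\<sigma>) =
        (\<integral>\<^sup>+ u. ennreal \<bar>f (b - (fst u - snd u))\<bar> \<partial>?\<sigma>) * (ennreal \<bar>g b\<bar> / ball_mass f 2 b)" .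
  qed
  also have "\<dots> \<le> (\<integral>\<^sup>+ b. (ennreal ?K * ball_mass f 2 b) * (ennreal \<bar>g b\<bar> / ball_mass f 2 b) \<partial>lborel)"
    by (intro nn_integral_mono mult_right_mono nn_integral_sphere_difference_le_ball_mass dim) auto
  also have "\<dots> \<le> (\<integral>\<^sup>+ b. ennreal ?K * ennreal \<bar>g b\<bar> \<partial>lborel)"
    by (intro nn_integral_mono) (simp only: mult.assoc, intro mult_left_mono ennreal_mult_divide_le zero_le)
  also have "\<dots> = ennreal ?K * (\<integral>\<^sup>+ y. ennreal \<bar>g y\<bar> \<partial>lborel)"
    by (rule nn_integral_cmult) measurable
  finally show ?thesis .
qed

lemma nn_integral_nn_bilinear_spherical_avg_div_ball_mass_le:
  fixes f g :: "'a::euclidean_space \<Rightarrow> real"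
  assumes [measurable]: "f \<in> borel_measurable borel" "g \<in> borel_measurable borel"
    and dim: "DIM('a) \<ge> 2"
  shows "(\<integral>\<^sup>+ x. nn_bilinear_spherical_avg f g x / ball_mass f 3 x \<partial>lborel)
    \<le> ennreal ((DIM('a))\<^sup>2 * unit_ball_vol DIM('a) / 2) * (\<integral>\<^sup>+ y. ennreal \<bar>g y\<bar> \<partial>lborel)"
proof -
  let ?\<sigma> = "sphere_surface_measure :: ('a \<times> 'a) measure"
  let ?K = "(DIM('a))\<^sup>2 * unit_ball_vol DIM('a) / 2"
  interpret \<sigma>: finite_measure ?\<sigma>
    by (rule finite_measure_sphere_surface_measure)
  interpret pair_sigma_finite lborel ?\<sigma> ..
  define h where "h x u = ennreal (\<bar>f (x - fst u)\<bar> * \<bar>g (x - snd u)\<bar>) / ball_mass f 3 x" for x u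
  define k where "k b u = ennreal (\<bar>f (b - (fst u - snd u))\<bar> * \<bar>g b\<bar>) / ball_mass f 2 b" for b u
  have [measurable]: "case_prod h \<in> borel_measurable (lborel \<Otimes>\<^sub>M ?\<sigma>)"
    unfolding h_def by measurable
  have [measurable]: "case_prod k \<in> borel_measurable (lborel \<Otimes>\<^sub>M ?\<sigma>)"
    unfolding k_def by measurable
  have "(\<integral>\<^sup>+ x. nn_bilinear_spherical_avg f g x / ball_mass f 3 x \<partial>lborel) = (\<integral>\<^sup>+ x. \<integral>\<^sup>+ u. h x u \<partial>?\<sigma> \<partial>lborel)"
    unfolding nn_bilinear_spherical_avg_def h_def divide_ennreal_def
    by (intro nn_integral_cong nn_integral_multc[symmetric]) measurable
  also have "\<dots> = (\<integral>\<^sup>+ u. \<integral>\<^sup>+ x. h x u \<partial>lborel \<partial>?\<sigma>)"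
    by (rule Fubini'[symmetric]) measurable
  also have "\<dots> \<le> (\<integral>\<^sup>+ u. \<integral>\<^sup>+ b. k b u \<partial>lborel \<partial>?\<sigma>)"
  proof (rule nn_integral_mono_AE)
    show "AE u in ?\<sigma>. (\<integral>\<^sup>+ x. h x u \<partial>lborel) \<le> (\<integral>\<^sup>+ b. k b u \<partial>lborel)"
      using AE_sphere_surface_measure_norm_le
    proof eventually_elim
      fix u :: "'a \<times> 'a"
      assume "norm u \<le> 1"
      then have "norm (snd u) \<le> 1"
        using norm_snd_le[of "snd u" "fst u"] by simp
      then show "(\<integral>\<^sup>+ x. h x u \<partial>lborel) \<le> (\<integral>\<^sup>+ b. k b u \<partial>lborel)"
        unfolding h_def k_def by (rule nn_integral_translate_div_ball_mass_le[OF assms(1,2)])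
    qed
  qed
  also have "\<dots> = (\<integral>\<^sup>+ b. \<integral>\<^sup>+ u. k b u \<partial>?\<sigma> \<partial>lborel)"
    by (rule Fubini') measurable
  also have "\<dots> \<le> ennreal ?K * (\<integral>\<^sup>+ y. ennreal \<bar>g y\<bar> \<partial>lborel)"
    unfolding k_def by (rule nn_integral_sphere_difference_div_ball_mass_le[OF assms])
  finally show ?thesis .
qed

definition bilinear_spherical_bound :: "nat \<Rightarrow> real" where
  "bilinear_spherical_bound d = real d ^ 2 * unit_ball_vol d / 2 + unit_ball_vol d * 3 ^ d"

lemma Ls_norm_pow_bilinear_spherical_avg_le_mult_powr:
  fixes f g :: "real^'n \<Rightarrow> real"
  assumes dim: "CARD('n) \<ge> 2" and s: "1/2 \<le> s" "s \<le> 1"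
    and [measurable]: "f \<in> borel_measurable borel" "g \<in> borel_measurable borel"
    and pos: "0 < \<alpha>" "0 < \<beta>"
    and f_le: "(\<integral>\<^sup>+ y. ennreal \<bar>f y\<bar> \<partial>lborel) \<le> ennreal \<alpha>"
    and g_le: "(\<integral>\<^sup>+ y. ennreal \<bar>g y\<bar> \<partial>lborel) \<le> ennreal \<beta>"
  shows "Ls_norm_pow s (bilinear_spherical_avg f g) \<le> ennreal (bilinear_spherical_bound CARD('n) * (\<alpha> * \<beta>) powr s)"
proof -
  let ?K = "real CARD('n) ^ 2 * unit_ball_vol CARD('n) / 2"
  let ?V = "unit_ball_vol CARD('n) * 3 ^ CARD('n)"
  let ?B = "nn_bilinear_spherical_avg f g" and ?F = "ball_mass f 3"
  have "(\<integral>\<^sup>+ x. ?B x / ?F x \<partial>lborel) \<le> ennreal ?K * (\<integral>\<^sup>+ y. ennreal \<bar>g y\<bar> \<partial>lborel)"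
    using nn_integral_nn_bilinear_spherical_avg_div_ball_mass_le[of f g] dim by simp
  also have "\<dots> \<le> ennreal ?K * ennreal \<beta>"
    using g_le by (rule mult_left_mono) simp
  finally have B_le: "(\<integral>\<^sup>+ x. ?B x / ?F x \<partial>lborel) \<le> ennreal ?K * ennreal \<beta>" .
  have F_le: "(\<integral>\<^sup>+ x. ?F x \<partial>lborel) \<le> ennreal ?V * ennreal \<alpha>"
    using f_le by (simp add: nn_integral_ball_mass mult_left_mono)
  have F_le_pointwise: "?F x \<le> ennreal \<alpha>" for x
    using ball_mass_le_nn_integral f_le by (rule order_trans)
  have "Ls_norm_pow s (bilinear_spherical_avg f g) \<le>
      (\<integral>\<^sup>+ x. ennreal ((\<alpha> * \<beta>) powr s) * (?B x / ?F x / ennreal \<beta> + ?F x / ennreal \<alpha>) \<partial>lborel)"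
    unfolding Ls_norm_pow_def
    by (intro nn_integral_mono powr_le_split_ennreal s pos abs_bilinear_spherical_avg_le F_le_pointwise) simp
  also have "\<dots> = ennreal ((\<alpha> * \<beta>) powr s) *
      ((\<integral>\<^sup>+ x. ?B x / ?F x \<partial>lborel) / ennreal \<beta> + (\<integral>\<^sup>+ x. ?F x \<partial>lborel) / ennreal \<alpha>)"
    by (simp add: divide_ennreal_def nn_integral_cmult nn_integral_add nn_integral_multc)
  also have "\<dots> \<le> ennreal ((\<alpha> * \<beta>) powr s) *
      (ennreal ?K * ennreal \<beta> / ennreal \<beta> + ennreal ?V * ennreal \<alpha> / ennreal \<alpha>)"
    by (intro mult_left_mono add_mono divide_right_mono_ennreal B_le F_le) auto
  also have "\<dots> = ennreal (bilinear_spherical_bound CARD('n) * (\<alpha> * \<beta>) powr s)"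
    using pos
    by (simp add: bilinear_spherical_bound_def divide_ennreal ennreal_mult[symmetric]
        ennreal_plus[symmetric] mult.commute del: ennreal_plus)
  finally show ?thesis .
qed

lemma Ls_norm_pow_bilinear_spherical_avg_le:
  fixes f g :: "real^'n \<Rightarrow> real"
  assumes "CARD('n) \<ge> 2" "1/2 \<le> s" "s \<le> 1" and f: "integrable lborel f" and g: "integrable lborel g"
  shows "Ls_norm_pow s (bilinear_spherical_avg f g)
    \<le> ennreal (bilinear_spherical_bound CARD('n) * (L1_norm f * L1_norm g) powr s)"
proof (rule le_ennreal_mult_powr_of_perturbation)
  have L1: "(\<integral>\<^sup>+ y. ennreal \<bar>h y\<bar> \<partial>lborel) = ennreal (L1_norm h)" if "integrable lborel h" for h :: "real^'n \<Rightarrow> real"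
    unfolding L1_norm_def using that by (intro nn_integral_eq_integral integrable_abs) auto
  show nonneg: "0 \<le> L1_norm f" "0 \<le> L1_norm g"
    by (auto simp: L1_norm_def)
  show "0 < s"
    using assms by simp
  show "Ls_norm_pow s (bilinear_spherical_avg f g)
      \<le> ennreal (bilinear_spherical_bound CARD('n) * ((L1_norm f + \<epsilon>) * (L1_norm g + \<epsilon>)) powr s)"
    if "0 < \<epsilon>" for \<epsilon>
    using assms that nonneg borel_measurable_integrable[OF f] borel_measurable_integrable[OF g]
    by (intro Ls_norm_pow_bilinear_spherical_avg_le_mult_powr) (auto simp: L1)
qed

theorem mainTheorem6:
  assumes "CARD('n) \<ge> 2"
    and "1/2 \<le> s" and "s \<le> 1"
  shows "\<exists>C::real. \<forall>(f::real^'n \<Rightarrow> real) g.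
           integrable lborel f \<longrightarrow> integrable lborel g \<longrightarrow>
           Ls_norm_pow s (bilinear_spherical_avg f g)
             \<le> ennreal ((C * L1_norm f * L1_norm g) powr s)"
proof (intro exI allI impI)
  fix f g :: "real^'n \<Rightarrow> real"
  assume "integrable lborel f" "integrable lborel g"
  let ?A = "bilinear_spherical_bound CARD('n)"
  have "0 \<le> ?A" "0 \<le> L1_norm f * L1_norm g" "0 < s"
    using assms by (auto simp: bilinear_spherical_bound_def L1_norm_def)
  then have "?A * (L1_norm f * L1_norm g) powr s = (?A powr (1/s) * L1_norm f * L1_norm g) powr s"
    by (simp add: powr_mult powr_powr mult.assoc)
  then show "Ls_norm_pow s (bilinear_spherical_avg f g) \<le> ennreal ((?A powr (1/s) * L1_norm f * L1_norm g) powr s)"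
    using Ls_norm_pow_bilinear_spherical_avg_le[OF assms \<open>integrable lborel f\<close> \<open>integrable lborel g\<close>]
    by simp
qed

end
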